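(* Fix $k$, $\theta^{(k)}\in\mathbb{R}^d$, step sizes $h_k,h_{k-1}>0$, $\beta_k\ge 0$, and a vector $p^{(k-1)}\in\mathbb{R}^d$; set $\theta^{(k-1)}=\theta^{(k)}-h_{k-1}p^{(k-1)}$. Define the natural Heavy-Ball momentum $$p^{(k)}=\beta_k\,G_X^{(k)\dagger}G_X^{(k,k-1)}p^{(k-1)}-h_k\,G^{(k)\dagger}\nabla L(\theta^{(k)})$$ and the quasi-natural Heavy-Ball momentum $$\overline{p^{(k)}}=\beta_k\,p^{(k-1)}-h_k\,G^{(k)\dagger}\nabla L(\theta^{(k)}).$$ Then $$\big\|\psi^{(k)T}\overline{p^{(k)}}-\psi^{(k)T}p^{(k)}\big\|_X\le h_{k-1}\,\beta_k\,\kappa_{\max}(\theta^{(k)})\,\|p^{(k-1)}\|_2^2+o\big(h_{k-1}\|p^{(k-1)}\|_2^2\big),$$ where the remainder $o(h_{k-1}\|p^{(k-1)}\|_2^2)$ is understood as $h_{k-1}\|p^{(k-1)}\|_2\to 0$ with $\theta^{(k)}$ fixed.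
   Context: $D:\mathbb{R}^d\to H$ is a twice continuously Fréchet differentiable map into a space $H$ of functions equipped with an inner product $(\cdot,\cdot)_X$ and norm $\|\cdot\|_X$ (the model class is $\mathcal{M}=D(\mathbb{R}^d)$). Write $\psi(\theta)=(\psi_1(\theta),\dots,\psi_d(\theta))$ with $\psi_i(\theta)=\frac{\partial D}{\partial\theta_i}(\theta)$, and for $c\in\mathbb{R}^d$, $\psi(\theta)^Tc=\sum_i c_i\psi_i(\theta)$. Let $\psi^{(j)}=\psi(\theta^{(j)})$. $G_X^{(k)}$ is the $d\times d$ Gram matrix with entries $(\psi^{(k)}_i,\psi^{(k)}_j)_X$, $G_X^{(k,k-1)}$ is the cross-Gram matrix with entries $(\psi^{(k)}_i,\psi^{(k-1)}_j)_X$, and $\dagger$ denotes the Moore–Penrose pseudo-inverse. $G^{(k)}$ is any symmetric positive semi-definite $d\times d$ matrix (Gram matrix of $\psi^{(k)}$ for some inner product $W$) and $\nabla L(\theta^{(k)})\in\mathbb{R}^d$ is the gradient of the parameter loss $L=\mathcal{L}\circ D$; these terms are the same in both momenta. $H_D(\theta):\mathbb{R}^d\times\mathbb{R}^d\to H$ denotes the second derivative (Hessian) of $D$ at $\theta$, and the maximal curvature is $\kappa_{\max}(\theta)=\max_{q\in\mathbb{R}^d,\|q\|_2=1}\|H_D(\theta)(q,q)\|_X$. *)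

theory Defs
  imports "HOL-Analysis.Analysis"
begin

definition pinv :: "real^'n^'n \<Rightarrow> real^'n^'n" where
  "pinv A = (THE B. A ** B ** A = A \<and> B ** A ** B = B \<and>
                    transpose (A ** B) = A ** B \<and> transpose (B ** A) = B ** A)"

definition sym_psd :: "real^'n^'n \<Rightarrow> bool" where
  "sym_psd G \<longleftrightarrow> transpose G = G \<and> (\<forall>x. 0 \<le> x \<bullet> (G *v x))"

text \<open>psi_i(theta) = dD/dtheta_i (theta), where DD theta is the Frechet derivative of D at theta.\<close>
definition psi :: "(real^'n \<Rightarrow> ((real^'n) \<Rightarrow>\<^sub>L 'h::real_normed_vector)) \<Rightarrow> real^'n \<Rightarrow> 'n \<Rightarrow> 'h" where
  "psi DD \<theta> i = blinfun_apply (DD \<theta>) (axis i 1)"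

definition psiT :: "(real^'n \<Rightarrow> ((real^'n) \<Rightarrow>\<^sub>L 'h::real_normed_vector)) \<Rightarrow> real^'n \<Rightarrow> real^'n \<Rightarrow> 'h" where
  "psiT DD \<theta> c = (\<Sum>i\<in>UNIV. c $ i *\<^sub>R psi DD \<theta> i)"

definition gramX :: "(real^'n \<Rightarrow> ((real^'n) \<Rightarrow>\<^sub>L 'h::real_inner)) \<Rightarrow> real^'n \<Rightarrow> real^'n^'n" where
  "gramX DD \<theta> = (\<chi> i j. inner (psi DD \<theta> i) (psi DD \<theta> j))"

definition cross_gramX :: "(real^'n \<Rightarrow> ((real^'n) \<Rightarrow>\<^sub>L 'h::real_inner)) \<Rightarrow> real^'n \<Rightarrow> real^'n \<Rightarrow> real^'n^'n" where
  "cross_gramX DD \<theta> \<theta>' = (\<chi> i j. inner (psi DD \<theta> i) (psi DD \<theta>' j))"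

definition kappa_max :: "(real^'n \<Rightarrow> ((real^'n) \<Rightarrow>\<^sub>L ((real^'n) \<Rightarrow>\<^sub>L 'h::real_normed_vector))) \<Rightarrow> real^'n \<Rightarrow> real" where
  "kappa_max D2 \<theta> = Sup {norm (blinfun_apply (blinfun_apply (D2 \<theta>) q) q) | q. norm q = 1}"

definition natural_hb :: "(real^'n \<Rightarrow> ((real^'n) \<Rightarrow>\<^sub>L 'h::real_inner)) \<Rightarrow> real^'n \<Rightarrow> real^'n
    \<Rightarrow> real \<Rightarrow> real \<Rightarrow> real^'n \<Rightarrow> real^'n^'n \<Rightarrow> real^'n \<Rightarrow> real^'n" where
  "natural_hb DD \<theta>k \<theta>km1 \<beta> hk pkm1 G g =
     \<beta> *\<^sub>R (pinv (gramX DD \<theta>k) *v (cross_gramX DD \<theta>k \<theta>km1 *v pkm1)) - hk *\<^sub>R (pinv G *v g)"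

definition quasi_natural_hb :: "real \<Rightarrow> real \<Rightarrow> real^'n \<Rightarrow> real^'n^'n \<Rightarrow> real^'n \<Rightarrow> real^'n" where
  "quasi_natural_hb \<beta> hk pkm1 G g = \<beta> *\<^sub>R pkm1 - hk *\<^sub>R (pinv G *v g)"

end

theory Submission
  imports Defs
begin

text \<open>
  Write Psi_t c = psi(t)^T c. Since G_X^(k,k-1) p = ((psi_i(theta_k), Psi_(theta_(k-1)) p)_X)_i,
  the Penrose conditions make Psi_(theta_k) G_X^(k)+ G_X^(k,k-1) p the orthogonal projection of
  Psi_(theta_(k-1)) p onto the tangent space spanned by the psi_i(theta_k). The gradient terms
  cancel, so the two momenta differ in function space by beta times the distance from the
  tangent vector Psi_(theta_k) p to this projection, which is at most
  beta * norm (Psi_(theta_k) p - Psi_(theta_(k-1)) p). Expanding the derivative of D to first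
  order at theta_k along theta_(k-1) - theta_k = -h p turns this difference into
  h H_D(theta_k)(p, p) + o(h |p|^2), and the curvature term is bounded by kappa_max.
\<close>

definition moore_penrose :: "real^'n^'n \<Rightarrow> real^'n^'n \<Rightarrow> bool" where
  "moore_penrose A B \<longleftrightarrow> A ** B ** A = A \<and> B ** A ** B = B \<and>
                    transpose (A ** B) = A ** B \<and> transpose (B ** A) = B ** A"

lemma inner_matrix_vector_mult_transpose:
  fixes A :: "real^'n^'n"
  shows "(A *v x) \<bullet> y = x \<bullet> (transpose A *v y)"
  by (simp add: dot_lmul_matrix[symmetric] inner_commute)

lemma symmetric_matrix_self_adjoint:
  fixes A :: "real^'n^'n"
  assumes "transpose A = A"
  shows "(A *v x) \<bullet> y = x \<bullet> (A *v y)"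
  by (metis assms inner_matrix_vector_mult_transpose)

lemma symmetric_matrix_if_self_adjoint:
  fixes A :: "real^'n^'n"
  assumes "\<And>x y. (A *v x) \<bullet> y = x \<bullet> (A *v y)"
  shows "transpose A = A"
proof -
  have "(transpose A *v y - A *v y) \<bullet> (transpose A *v y - A *v y) = 0" for y
    using assms[of "transpose A *v y - A *v y" y]
    by (simp add: inner_diff_left inner_diff_right inner_matrix_vector_mult_transpose)
  then show ?thesis by (simp add: matrix_eq)
qed

lemma moore_penrose_unique:
  assumes "moore_penrose A B" "moore_penrose A B'"
  shows "B = B'"
proof -
  have a: "A ** B ** A = A" "B ** A ** B = B" "transpose (A ** B) = A ** B" "transpose (B ** A) = B ** A"
    and b: "A ** B' ** A = A" "B' ** A ** B' = B'" "transpose (A ** B') = A ** B'" "transpose (B' ** A) = B' ** A"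
    using assms by (auto simp: moore_penrose_def)
  have "B = B ** transpose (A ** B)" using a by (simp add: matrix_mul_assoc)
  also have "\<dots> = B ** transpose (A ** B' ** A ** B)" using b by simp
  also have "\<dots> = B ** transpose (A ** B) ** transpose (A ** B')"
    by (simp add: matrix_transpose_mul matrix_mul_assoc)
  also have "\<dots> = B ** A ** B'" using a b by (simp add: matrix_mul_assoc)
  finally have left: "B = B ** A ** B'" .
  have "B' = transpose (B' ** A) ** B'" using b by simp
  also have "\<dots> = transpose (B' ** (A ** B ** A)) ** B'" using a by simp
  also have "\<dots> = transpose (B ** A) ** transpose (B' ** A) ** B'"
    by (simp add: matrix_transpose_mul matrix_mul_assoc)
  also have "\<dots> = B ** A ** B' ** A ** B'" using a b by (simp add: matrix_mul_assoc)
  also have "\<dots> = B ** A ** B'" using b by (metis matrix_mul_assoc)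
  finally show ?thesis using left by simp
qed

lemma symmetric_matrix_kernel_iff_orthogonal_range:
  fixes A :: "real^'n^'n"
  assumes "transpose A = A"
  shows "A *v z = 0 \<longleftrightarrow> (\<forall>x. z \<bullet> (A *v x) = 0)"
proof
  assume "\<forall>x. z \<bullet> (A *v x) = 0"
  then have "(A *v z) \<bullet> (A *v z) = 0"
    by (simp add: symmetric_matrix_self_adjoint[OF assms])
  then show "A *v z = 0" by simp
qed (simp add: symmetric_matrix_self_adjoint[OF assms, symmetric])

lemma symmetric_matrix_inverse_on_range:
  fixes A :: "real^'n^'n"
  assumes "transpose A = A"
  obtains g where "linear g" "\<And>y. g y \<in> range ((*v) A)"
    "\<And>v. v \<in> range ((*v) A) \<Longrightarrow> g (A *v v) = v"
    "\<And>y. y \<in> range ((*v) A) \<Longrightarrow> A *v g y = y"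
proof -
  let ?V = "range ((*v) A)"
  have "subspace ?V" by (simp add: linear_subspace_image)
  then have span_V: "span ?V = ?V" by simp
  have "inj_on ((*v) A) ?V"
  proof (rule inj_onI)
    fix u v assume "u \<in> ?V" "v \<in> ?V" "A *v u = A *v v"
    then obtain x y where "u = A *v x" "v = A *v y" "A *v (u - v) = 0"
      by (auto simp: matrix_vector_mult_diff_distrib)
    then have "(u - v) \<bullet> (A *v (x - y)) = 0"
      using symmetric_matrix_kernel_iff_orthogonal_range[OF assms] by blast
    then show "u = v"
      using \<open>u = A *v x\<close> \<open>v = A *v y\<close> by (simp add: matrix_vector_mult_diff_distrib)
  qed
  then obtain g where g: "range g \<subseteq> ?V" "linear g" "\<And>v. v \<in> ?V \<Longrightarrow> g (A *v v) = v"
    using linear_exists_left_inverse_on[OF _ \<open>subspace ?V\<close>] by (metis matrix_vector_mul_linear)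
  have "A *v g (A *v x) = A *v x" for x
  proof -
    obtain v z where "v \<in> ?V" "\<And>w. w \<in> ?V \<Longrightarrow> orthogonal z w" "x = v + z"
      using orthogonal_subspace_decomp_exists[of ?V x] span_V by metis
    moreover have "A *v z = 0"
      using calculation symmetric_matrix_kernel_iff_orthogonal_range[OF assms]
      by (simp add: orthogonal_def)
    ultimately show ?thesis
      using g(3) by (simp add: matrix_vector_right_distrib)
  qed
  then show thesis using that g by blast
qed

lemma moore_penrose_exists_symmetric:
  fixes A :: "real^'n^'n"
  assumes "transpose A = A"
  shows "\<exists>B. moore_penrose A B"
proof -
  let ?V = "range ((*v) A)"
  obtain g where g: "linear g" "\<And>y. g y \<in> ?V" "\<And>v. v \<in> ?V \<Longrightarrow> g (A *v v) = v"
    "\<And>y. y \<in> ?V \<Longrightarrow> A *v g y = y"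
    using symmetric_matrix_inverse_on_range[OF assms] by blast
  \<comment> \<open>\<open>Q\<close> is the orthogonal projection onto the range of \<open>A\<close>, and \<open>B = g \<circ> Q\<close>.\<close>
  define Q where "Q x = g (A *v x)" for x
  have Q_range: "Q x \<in> ?V" and A_Q: "A *v Q x = A *v x" for x
    using g by (auto simp: Q_def)
  have Q_id: "v \<in> ?V \<Longrightarrow> Q v = v" for v
    using g(3) by (simp add: Q_def)
  have Q_self_adjoint: "Q x \<bullet> y = x \<bullet> Q y" for x y
  proof -
    have orth: "(x - Q x) \<bullet> Q y = 0" for x y
      using symmetric_matrix_kernel_iff_orthogonal_range[OF assms, of "x - Q x"] Q_range[of y] A_Q[of x]
      by (auto simp: matrix_vector_mult_diff_distrib)
    show ?thesis
      using orth[of x y] orth[of y x] by (simp add: inner_diff_left inner_diff_right inner_commute)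
  qed
  define B where "B = matrix g ** matrix g ** A"
  have B: "B *v x = g (Q x)" for x
    using g(1) by (simp add: B_def Q_def matrix_vector_mul_assoc[symmetric] matrix_works)
  have AB: "A *v (B *v x) = Q x" and BA: "B *v (A *v x) = Q x" for x
    using g Q_range Q_id by (auto simp: B Q_def)
  have "A ** B ** A = A"
    by (simp add: matrix_eq matrix_vector_mul_assoc[symmetric] AB Q_id)
  moreover have "B ** A ** B = B"
  proof -
    have "B *v x \<in> ?V" for x by (simp add: B g(2))
    then show ?thesis by (simp add: matrix_eq matrix_vector_mul_assoc[symmetric] BA Q_id)
  qed
  moreover have "transpose (A ** B) = A ** B" "transpose (B ** A) = B ** A"
    by (auto intro!: symmetric_matrix_if_self_adjoint
        simp: matrix_vector_mul_assoc[symmetric] AB BA Q_self_adjoint)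
  ultimately show ?thesis unfolding moore_penrose_def by blast
qed

lemma moore_penrose_pinv_symmetric:
  assumes "transpose A = A"
  shows "moore_penrose A (pinv A)"
proof -
  have "\<exists>!B. moore_penrose A B"
    using moore_penrose_exists_symmetric[OF assms] moore_penrose_unique by blast
  then show ?thesis
    unfolding pinv_def moore_penrose_def[abs_def] by (rule theI')
qed

lemma moore_penrose_solves_kernel_orthogonal:
  fixes A :: "real^'n^'n"
  assumes "moore_penrose A B" "transpose A = A"
    and b_orth_kernel: "\<And>r. A *v r = 0 \<Longrightarrow> r \<bullet> b = 0"
  shows "A *v (B *v b) = b"
proof -
  define S where "S = A ** B"
  have S_sym: "transpose S = S"
    using assms(1) by (simp add: moore_penrose_def S_def)
  have S_idem: "S ** S = S"
    using assms(1) by (simp add: moore_penrose_def S_def matrix_mul_assoc)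
  have "A ** S = A ** transpose S" using S_sym by simp
  also have "\<dots> = transpose (A ** B ** A)"
    using assms(2) by (simp add: S_def matrix_transpose_mul matrix_mul_assoc)
  finally have A_S: "A ** S = A"
    using assms by (simp add: moore_penrose_def)
  define r where "r = b - S *v b"
  have "r \<bullet> b = 0"
    using b_orth_kernel A_S
    by (simp add: r_def matrix_vector_mult_diff_distrib matrix_vector_mul_assoc)
  moreover have "r \<bullet> (S *v b) = 0"
    using symmetric_matrix_self_adjoint[OF S_sym, of r b] S_idem
    by (simp add: r_def matrix_vector_mult_diff_distrib matrix_vector_mul_assoc)
  ultimately have "r \<bullet> r = 0"
    by (simp add: r_def inner_diff_right)
  then show ?thesis
    by (simp add: r_def S_def matrix_vector_mul_assoc)
qed

lemma psiT_eq_blinfun_apply: "psiT DD \<theta> c = blinfun_apply (DD \<theta>) c"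
proof -
  have "blinfun_apply (DD \<theta>) c = blinfun_apply (DD \<theta>) (\<Sum>i\<in>UNIV. c $ i *\<^sub>R axis i 1)"
    using basis_expansion[of c] by (simp add: scalar_mult_eq_scaleR)
  then show ?thesis
    by (simp add: psiT_def psi_def blinfun.sum_right blinfun.scaleR_right)
qed

definition psi_adjoint :: "(real^'n \<Rightarrow> ((real^'n) \<Rightarrow>\<^sub>L 'h::real_inner)) \<Rightarrow> real^'n \<Rightarrow> 'h \<Rightarrow> real^'n" where
  "psi_adjoint DD \<theta> v = (\<chi> i. psi DD \<theta> i \<bullet> v)"

lemma inner_psi_adjoint: "c \<bullet> psi_adjoint DD \<theta> v = blinfun_apply (DD \<theta>) c \<bullet> v"
  by (simp add: psi_adjoint_def inner_vec_def psiT_eq_blinfun_apply[symmetric] psiT_def inner_sum_left)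

lemma cross_gramX_mult: "cross_gramX DD \<theta> \<theta>' *v w = psi_adjoint DD \<theta> (blinfun_apply (DD \<theta>') w)"
  by (simp add: vec_eq_iff cross_gramX_def psi_adjoint_def matrix_vector_mult_def
      psiT_eq_blinfun_apply[symmetric] psiT_def inner_sum_right mult.commute)

lemma gramX_mult: "gramX DD \<theta> *v w = psi_adjoint DD \<theta> (blinfun_apply (DD \<theta>) w)"
  by (simp add: vec_eq_iff gramX_def psi_adjoint_def matrix_vector_mult_def
      psiT_eq_blinfun_apply[symmetric] psiT_def inner_sum_right mult.commute)

lemma transpose_gramX: "transpose (gramX DD \<theta>) = gramX DD \<theta>"
  by (simp add: gramX_def transpose_def vec_eq_iff inner_commute)

definition tangent_projection :: "(real^'n \<Rightarrow> ((real^'n) \<Rightarrow>\<^sub>L 'h::real_inner)) \<Rightarrow> real^'n \<Rightarrow> 'h \<Rightarrow> 'h" where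
  "tangent_projection DD \<theta> v = blinfun_apply (DD \<theta>) (pinv (gramX DD \<theta>) *v psi_adjoint DD \<theta> v)"

lemma tangent_projection_orthogonal:
  "blinfun_apply (DD \<theta>) c \<bullet> (v - tangent_projection DD \<theta> v) = 0"
proof -
  let ?G = "gramX DD \<theta>" and ?b = "psi_adjoint DD \<theta> v"
  have "?G *v r = 0 \<Longrightarrow> r \<bullet> ?b = 0" for r
    using inner_psi_adjoint[of r DD \<theta> "blinfun_apply (DD \<theta>) r"] inner_psi_adjoint[of r DD \<theta> v]
    by (simp add: gramX_mult)
  then have "?G *v (pinv ?G *v ?b) = ?b"
    using moore_penrose_solves_kernel_orthogonal moore_penrose_pinv_symmetric transpose_gramX by blast
  then have "blinfun_apply (DD \<theta>) c \<bullet> tangent_projection DD \<theta> v = c \<bullet> ?b"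
    by (metis tangent_projection_def gramX_mult inner_psi_adjoint)
  then show ?thesis
    by (simp add: inner_diff_right inner_psi_adjoint)
qed

lemma norm_minus_tangent_projection_le:
  "norm (blinfun_apply (DD \<theta>) p - tangent_projection DD \<theta> v) \<le> norm (blinfun_apply (DD \<theta>) p - v)"
proof -
  let ?P = "tangent_projection DD \<theta> v"
  let ?c = "p - pinv (gramX DD \<theta>) *v psi_adjoint DD \<theta> v"
  have "blinfun_apply (DD \<theta>) p - ?P = blinfun_apply (DD \<theta>) ?c"
    by (simp add: tangent_projection_def blinfun.diff_right)
  then have "(blinfun_apply (DD \<theta>) p - ?P) \<bullet> (?P - v) = 0"
    using tangent_projection_orthogonal[of DD \<theta> ?c v]
    by (metis inner_minus_right minus_diff_eq neg_equal_0_iff_equal)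
  then have "(norm (blinfun_apply (DD \<theta>) p - v))\<^sup>2 = (norm (blinfun_apply (DD \<theta>) p - ?P))\<^sup>2 + (norm (?P - v))\<^sup>2"
    using norm_add_Pythagorean[of "blinfun_apply (DD \<theta>) p - ?P" "?P - v"] by (simp add: orthogonal_def)
  then show ?thesis
    by (metis le_add_same_cancel1 norm_ge_zero power2_le_imp_le zero_le_power2)
qed

lemma norm_psiT_quasi_natural_minus_natural_le:
  fixes DD :: "real^'n \<Rightarrow> ((real^'n) \<Rightarrow>\<^sub>L 'h::real_inner)"
  assumes "\<beta> \<ge> 0"
  shows "norm (psiT DD \<theta> (quasi_natural_hb \<beta> hk p G g) - psiT DD \<theta> (natural_hb DD \<theta> \<theta>' \<beta> hk p G g))
    \<le> \<beta> * norm (blinfun_apply (DD \<theta>) p - blinfun_apply (DD \<theta>') p)"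
proof -
  let ?P = "tangent_projection DD \<theta> (blinfun_apply (DD \<theta>') p)"
  have "psiT DD \<theta> (quasi_natural_hb \<beta> hk p G g) - psiT DD \<theta> (natural_hb DD \<theta> \<theta>' \<beta> hk p G g)
      = \<beta> *\<^sub>R (blinfun_apply (DD \<theta>) p - ?P)"
    by (simp add: psiT_eq_blinfun_apply quasi_natural_hb_def natural_hb_def cross_gramX_mult
        tangent_projection_def blinfun.diff_right blinfun.scaleR_right algebra_simps)
  then show ?thesis
    using assms norm_minus_tangent_projection_le[of DD \<theta> p "blinfun_apply (DD \<theta>') p"]
    by (simp add: mult_left_mono)
qed

lemma norm_hessian_le_kappa_max:
  fixes H :: "real^'n \<Rightarrow> ((real^'n) \<Rightarrow>\<^sub>L ((real^'n) \<Rightarrow>\<^sub>L 'h::real_normed_vector))"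
  shows "norm (blinfun_apply (blinfun_apply (H \<theta>) p) p) \<le> kappa_max H \<theta> * (norm p)\<^sup>2"
proof (cases "p = 0")
  case False
  let ?H = "\<lambda>q. norm (blinfun_apply (blinfun_apply (H \<theta>) q) q)"
  define q where "q = p /\<^sub>R norm p"
  have "?H q' \<le> norm (H \<theta>)" if "norm q' = 1" for q'
    using norm_blinfun[of "blinfun_apply (H \<theta>) q'" q'] norm_blinfun[of "H \<theta>" q'] that
    by simp
  then have "bdd_above {?H q' | q'. norm q' = 1}"
    by (auto intro!: bdd_aboveI[where M = "norm (H \<theta>)"])
  moreover have "norm q = 1" using False by (simp add: q_def)
  ultimately have "?H q \<le> kappa_max H \<theta>"
    unfolding kappa_max_def by (auto intro: cSup_upper)
  moreover have "?H q = ?H p / (norm p)\<^sup>2"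
    by (simp add: q_def blinfun.scaleR_right blinfun.scaleR_left power2_eq_square divide_inverse)
  ultimately show ?thesis
    using False by (simp add: divide_le_eq)
qed simp

lemma norm_tangent_change_le:
  fixes DD :: "real^'n \<Rightarrow> ((real^'n) \<Rightarrow>\<^sub>L 'h::real_normed_vector)"
  assumes "(DD has_derivative blinfun_apply (H \<theta>)) (at \<theta>)" "\<epsilon> > 0"
  obtains \<delta> where "\<delta> > 0"
    "\<And>h p. 0 < h \<Longrightarrow> h * norm p < \<delta> \<Longrightarrow>
       norm (blinfun_apply (DD \<theta>) p - blinfun_apply (DD (\<theta> - h *\<^sub>R p)) p)
         \<le> h * kappa_max H \<theta> * (norm p)\<^sup>2 + \<epsilon> * (h * (norm p)\<^sup>2)"
proof -
  obtain \<delta> where "\<delta> > 0" and taylor: "\<And>y. norm (y - \<theta>) < \<delta> \<Longrightarrow>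
      norm (DD y - DD \<theta> - H \<theta> (y - \<theta>)) \<le> \<epsilon> * norm (y - \<theta>)"
    using assms unfolding has_derivative_at_alt by blast
  have "norm (blinfun_apply (DD \<theta>) p - blinfun_apply (DD (\<theta> - h *\<^sub>R p)) p)
      \<le> h * kappa_max H \<theta> * (norm p)\<^sup>2 + \<epsilon> * (h * (norm p)\<^sup>2)"
    if "0 < h" "h * norm p < \<delta>" for h p
  proof -
    define R where "R = DD (\<theta> - h *\<^sub>R p) - DD \<theta> - H \<theta> (- h *\<^sub>R p)"
    have "norm R \<le> \<epsilon> * (h * norm p)"
      using taylor[of "\<theta> - h *\<^sub>R p"] that by (simp add: R_def)
    then have "norm (blinfun_apply R p) \<le> \<epsilon> * (h * norm p) * norm p"
      using norm_blinfun[of R p] by (meson mult_right_mono norm_ge_zero order_trans)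
    moreover have "norm (h *\<^sub>R blinfun_apply (H \<theta> p) p) \<le> h * kappa_max H \<theta> * (norm p)\<^sup>2"
      using that(1) norm_hessian_le_kappa_max[of H \<theta> p] by (simp add: mult.assoc)
    moreover have "blinfun_apply (DD \<theta>) p - blinfun_apply (DD (\<theta> - h *\<^sub>R p)) p
        = h *\<^sub>R blinfun_apply (H \<theta> p) p - blinfun_apply R p"
      by (simp add: R_def blinfun.diff_left blinfun.add_left blinfun.minus_right blinfun.scaleR_left blinfun.scaleR_right)
    ultimately show ?thesis
      using norm_triangle_ineq4[of "h *\<^sub>R blinfun_apply (H \<theta> p) p" "blinfun_apply R p"]
      by (simp add: power2_eq_square mult.assoc)
  qed
  with \<open>\<delta> > 0\<close> show thesis by (rule that)
qed

theorem mainTheorem3: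
  fixes D :: "real^'n \<Rightarrow> 'h::real_inner"
    and DD :: "real^'n \<Rightarrow> ((real^'n) \<Rightarrow>\<^sub>L 'h)"
    and D2 :: "real^'n \<Rightarrow> ((real^'n) \<Rightarrow>\<^sub>L ((real^'n) \<Rightarrow>\<^sub>L 'h))"
  assumes D_deriv: "\<And>\<theta>. (D has_derivative blinfun_apply (DD \<theta>)) (at \<theta>)"
    and DD_deriv: "\<And>\<theta>. (DD has_derivative blinfun_apply (D2 \<theta>)) (at \<theta>)"
    and D2_cont: "continuous_on UNIV D2"
  shows "\<forall>\<theta>k :: real^'n. \<forall>\<beta> hk :: real. \<forall>G :: real^'n^'n. \<forall>g :: real^'n.
           \<beta> \<ge> 0 \<longrightarrow> hk > 0 \<longrightarrow> sym_psd G \<longrightarrow>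
           (\<forall>\<epsilon>>0. \<exists>\<delta>>0. \<forall>hkm1 :: real. \<forall>pkm1 :: real^'n.
              hkm1 > 0 \<longrightarrow> hkm1 * norm pkm1 < \<delta> \<longrightarrow>
              norm (psiT DD \<theta>k (quasi_natural_hb \<beta> hk pkm1 G g)
                    - psiT DD \<theta>k (natural_hb DD \<theta>k (\<theta>k - hkm1 *\<^sub>R pkm1) \<beta> hk pkm1 G g))
              \<le> hkm1 * \<beta> * kappa_max D2 \<theta>k * (norm pkm1)\<^sup>2 + \<epsilon> * (hkm1 * (norm pkm1)\<^sup>2))"
proof (intro allI impI)
  fix \<theta>k :: "real^'n" and \<beta> hk \<epsilon> :: real and G :: "real^'n^'n" and g :: "real^'n"
  assume "\<beta> \<ge> 0" "\<epsilon> > 0"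
  let ?diff = "\<lambda>h p. norm (psiT DD \<theta>k (quasi_natural_hb \<beta> hk p G g)
                    - psiT DD \<theta>k (natural_hb DD \<theta>k (\<theta>k - h *\<^sub>R p) \<beta> hk p G g))"
  let ?change = "\<lambda>h p. norm (blinfun_apply (DD \<theta>k) p - blinfun_apply (DD (\<theta>k - h *\<^sub>R p)) p)"
  let ?\<kappa> = "kappa_max D2 \<theta>k"
  define \<epsilon>' where "\<epsilon>' = \<epsilon> / (\<beta> + 1)"
  have "\<epsilon>' > 0" and "\<beta> * \<epsilon>' \<le> \<epsilon>"
    using \<open>\<beta> \<ge> 0\<close> \<open>\<epsilon> > 0\<close> by (simp_all add: \<epsilon>'_def field_simps)
  obtain \<delta> where "\<delta> > 0" and change: "\<And>h p. 0 < h \<Longrightarrow> h * norm p < \<delta> \<Longrightarrow>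
      ?change h p \<le> h * ?\<kappa> * (norm p)\<^sup>2 + \<epsilon>' * (h * (norm p)\<^sup>2)"
    using norm_tangent_change_le[where H = D2 and \<theta> = \<theta>k, OF DD_deriv \<open>\<epsilon>' > 0\<close>] by blast
  have "?diff h p \<le> h * \<beta> * ?\<kappa> * (norm p)\<^sup>2 + \<epsilon> * (h * (norm p)\<^sup>2)"
    if "0 < h" "h * norm p < \<delta>" for h p
  proof -
    have "?diff h p \<le> \<beta> * ?change h p"
      using \<open>\<beta> \<ge> 0\<close> by (rule norm_psiT_quasi_natural_minus_natural_le)
    also have "\<dots> \<le> \<beta> * (h * ?\<kappa> * (norm p)\<^sup>2 + \<epsilon>' * (h * (norm p)\<^sup>2))"
      using change[OF that] \<open>\<beta> \<ge> 0\<close> by (rule mult_left_mono)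
    also have "\<dots> \<le> h * \<beta> * ?\<kappa> * (norm p)\<^sup>2 + \<epsilon> * (h * (norm p)\<^sup>2)"
      using mult_right_mono[OF \<open>\<beta> * \<epsilon>' \<le> \<epsilon>\<close>, of "h * (norm p)\<^sup>2"] \<open>0 < h\<close>
      by (simp add: algebra_simps)
    finally show ?thesis .
  qed
  with \<open>\<delta> > 0\<close> show "\<exists>\<delta>>0. \<forall>h p. 0 < h \<longrightarrow> h * norm p < \<delta> \<longrightarrow>
      ?diff h p \<le> h * \<beta> * ?\<kappa> * (norm p)\<^sup>2 + \<epsilon> * (h * (norm p)\<^sup>2)"
    by blast
qed

end
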